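(* Let $\Gamma$ be a ring of loops: vertices $w_1,\dots,w_r$ ($r\ge 2$) arranged cyclically, where each pair of cyclically consecutive vertices $w_j,w_{j+1}$ (indices mod $r$) is joined by two parallel edges of equal length, forming a loop of length $\lambda_j$. Suppose the distinct loop lengths are $L_1,\dots,L_m$, with $L_i$ occurring $n_i$ times, and $L=\sum_j\lambda_j$. Then, with standard vertex conditions, the eigenfrequencies of $\mathbf{L}(\Gamma)$ are $0$ with multiplicity one, $4\pi N/L$ with multiplicity two for each positive integer $N$, and $2\pi N/L_i$ with multiplicity $n_i$ for each $i$ and positive integer $N$ (multiplicities adding when values coincide); equivalently the secular equation is $\Sigma(k)=\left(-1+e^{ikL/2}\right)^2\prod_{i=1}^m\left(-1+e^{iL_ik}\right)^{n_i}$. In particular the spectrum does not depend on the order of the loops around the ring.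
   Context: On each edge the operator is $\mathbf{L}=-\frac{d^2}{dx^2}$ with standard (Neumann–Kirchhoff) vertex conditions: continuity at each vertex and vanishing sum of outward normal derivatives. Eigenvalues are $\lambda=k^2$, $k\ge0$. *)

theory Defs
  imports "HOL-Analysis.Analysis" "HOL-Library.Function_Algebras"
begin

text \<open>A finite metric graph with edges 0..<nE; edge e is the interval [0, len e],
  with x = 0 at vertex src e and x = len e at vertex tgt e.
  A function on the graph is F :: nat \<Rightarrow> real \<Rightarrow> real, F e being the
  restriction to edge e (required to vanish off the graph so that the
  eigenspace is a genuine subspace of the function space).\<close>

definition std_eigenfunction ::
  "nat \<Rightarrow> (nat \<Rightarrow> nat) \<Rightarrow> (nat \<Rightarrow> nat) \<Rightarrow> (nat \<Rightarrow> real) \<Rightarrow> real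
     \<Rightarrow> (nat \<Rightarrow> real \<Rightarrow> real) \<Rightarrow> bool" where
  "std_eigenfunction nE src tgt len k F \<longleftrightarrow>
     (\<forall>e x. (e \<ge> nE \<or> x \<notin> {0..len e}) \<longrightarrow> F e x = 0) \<and>
     (\<exists>D :: nat \<Rightarrow> real \<Rightarrow> real.
        (\<forall>e<nE. \<forall>x\<in>{0..len e}.
           (F e has_real_derivative D e x) (at x within {0..len e}) \<and>
           (D e has_real_derivative (- (k\<^sup>2 * F e x))) (at x within {0..len e})) \<and>
        (\<forall>v. \<exists>c. \<forall>e<nE. (src e = v \<longrightarrow> F e 0 = c) \<and> (tgt e = v \<longrightarrow> F e (len e) = c)) \<and>
        (\<forall>v. (\<Sum>e | e < nE \<and> src e = v. - D e 0)
             + (\<Sum>e | e < nE \<and> tgt e = v. D e (len e)) = 0))"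

definition std_eigenspace ::
  "nat \<Rightarrow> (nat \<Rightarrow> nat) \<Rightarrow> (nat \<Rightarrow> nat) \<Rightarrow> (nat \<Rightarrow> real) \<Rightarrow> real
     \<Rightarrow> (nat \<Rightarrow> real \<Rightarrow> real) set" where
  "std_eigenspace nE src tgt len k = {F. std_eigenfunction nE src tgt len k F}"

definition multiplicity_std ::
  "nat \<Rightarrow> (nat \<Rightarrow> nat) \<Rightarrow> (nat \<Rightarrow> nat) \<Rightarrow> (nat \<Rightarrow> real) \<Rightarrow> real \<Rightarrow> nat" where
  "multiplicity_std nE src tgt len k =
     vector_space.dim (\<lambda>(c::real) (F :: nat \<Rightarrow> real \<Rightarrow> real). \<lambda>e x. c * F e x)
       (std_eigenspace nE src tgt len k)"

text \<open>Ring of loops with r vertices 0..<r and loop lengths lam 0 .. lam (r-1):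
  edges 2j and 2j+1 both run from vertex j to vertex (j+1) mod r, each of length lam j / 2.\<close>
definition ring_tl :: "nat \<Rightarrow> nat \<Rightarrow> nat" where "ring_tl r e = e div 2"
definition ring_hd :: "nat \<Rightarrow> nat \<Rightarrow> nat" where "ring_hd r e = (e div 2 + 1) mod r"
definition ring_len :: "(nat \<Rightarrow> real) \<Rightarrow> nat \<Rightarrow> real" where "ring_len lam e = lam (e div 2) / 2"

end

theory Submission
  imports Defs
begin

text \<open>On every edge an eigenfunction is a cos kx + b sin kx (affine for k = 0). On loop j split it
  into the part common to both parallel edges and the remainder, which is \<alpha>_j sin kx on one edge and
  -\<alpha>_j sin kx on the other. The remainder vanishes at both ends of the loop, so it satisfies all vertex
  conditions by itself as soon as sin (k \<lambda>_j / 2) = 0; this gives one dimension per loop with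
  k \<in> 2\<pi>\<nat>/\<lambda>_j. The common parts glue to a solution of u'' = -k^2 u along the cycle of length L/2
  through all vertices, i.e. to A cos ks + B sin ks in arc length s, which closes up exactly when
  k L / 2 \<in> 2\<pi>\<int>: two more dimensions for k \<in> 4\<pi>\<nat>/L. For k = 0 only the constants survive.\<close>

section \<open>The equation u'' = -k^2 u on an interval\<close>

lemma harmonic_solution_unique:
  fixes f d :: "real \<Rightarrow> real" and k l :: real
  assumes k: "k \<noteq> 0"
    and ode: "\<forall>x\<in>{0..l}. (f has_real_derivative d x) (at x within {0..l}) \<and>
            (d has_real_derivative -(k\<^sup>2*f x)) (at x within {0..l})"
    and x: "x \<in> {0..l}"
  shows "f x = f 0 * cos (k*x) + d 0 / k * sin (k*x) \<and> d x = - k * f 0 * sin (k*x) + d 0 * cos (k*x)"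
proof -
  define h where "h x = f x - (f 0 * cos (k*x) + d 0 / k * sin (k*x))" for x
  define h' where "h' x = d x - (- k * f 0 * sin (k*x) + d 0 * cos (k*x))" for x
  txt \<open>The energy of the difference h is conserved and vanishes at 0.\<close>
  define E where "E x = (h' x)\<^sup>2 + k\<^sup>2 * (h x)\<^sup>2" for x
  have "\<exists>c. \<forall>y\<in>{0..l}. E y = c"
  proof (rule has_field_derivative_zero_constant)
    fix y assume y: "y \<in> {0..l}"
    have fy: "(f has_real_derivative d y) (at y within {0..l})" and dy: "(d has_real_derivative -(k\<^sup>2*f y)) (at y within {0..l})"
      using ode y by auto
    have "(h has_real_derivative (d y - (f 0 * (-sin (k*y)*(k*1)) + d 0/k*(cos (k*y)*(k*1))))) (at y within {0..l})"
      unfolding h_def by (auto intro!: derivative_eq_intros fy)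
    moreover have "d y - (f 0 * (-sin (k*y)*(k*1)) + d 0/k*(cos (k*y)*(k*1))) = h' y"
      unfolding h'_def using k by simp
    ultimately have dh: "(h has_real_derivative h' y) (at y within {0..l})" by simp
    have "(h' has_real_derivative (-(k\<^sup>2*f y) - (- k * f 0 * (cos (k*y)*(k*1)) + d 0 * (-sin (k*y)*(k*1))))) (at y within {0..l})"
      unfolding h'_def by (auto intro!: derivative_eq_intros dy)
    moreover have "-(k\<^sup>2*f y) - (- k * f 0 * (cos (k*y)*(k*1)) + d 0 * (-sin (k*y)*(k*1))) = -(k\<^sup>2 * h y)"
      unfolding h_def using k by (simp add: field_simps power2_eq_square)
    ultimately have dh': "(h' has_real_derivative -(k\<^sup>2 * h y)) (at y within {0..l})" by simp
    have "((\<lambda>x. h' x * h' x + k\<^sup>2 * (h x * h x)) has_real_derivative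
       ((-(k\<^sup>2 * h y)) * h' y + (-(k\<^sup>2 * h y)) * h' y + k\<^sup>2 * (h' y * h y + h' y * h y))) (at y within {0..l})"
      by (intro DERIV_add DERIV_mult dh dh' DERIV_cmult)
    then show "(E has_real_derivative 0) (at y within {0..l})"
      unfolding E_def by (simp add: power2_eq_square algebra_simps)
  qed simp
  then obtain c where c: "\<forall>y\<in>{0..l}. E y = c" by blast
  have "0 \<in> {0..l}" using x by auto
  then have "E 0 = c" using c by blast
  moreover have "E 0 = 0" unfolding E_def h_def h'_def using k by simp
  ultimately have "E x = 0" using c x by simp
  then have "(h' x)\<^sup>2 = 0 \<and> k\<^sup>2 * (h x)\<^sup>2 = 0" unfolding E_def
    using add_nonneg_eq_0_iff[of "(h' x)\<^sup>2" "k\<^sup>2 * (h x)\<^sup>2"] by simp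
  then have "h' x = 0 \<and> h x = 0" using k by simp
  then show ?thesis unfolding h_def h'_def by simp
qed

lemma affine_solution_unique:
  fixes f d :: "real \<Rightarrow> real" and l :: real
  assumes ode: "\<forall>x\<in>{0..l}. (f has_real_derivative d x) (at x within {0..l}) \<and>
            (d has_real_derivative -((0::real)\<^sup>2*f x)) (at x within {0..l})"
    and x: "x \<in> {0..l}"
  shows "f x = f 0 + d 0 * x \<and> d x = d 0"
proof -
  have "\<exists>c. \<forall>y\<in>{0..l}. d y = c"
  proof (rule has_field_derivative_zero_constant)
    fix y assume y: "y \<in> {0..l}"
    then have "(d has_real_derivative -((0::real)\<^sup>2*f y)) (at y within {0..l})" using ode by blast
    then show "(d has_real_derivative 0) (at y within {0..l})" by simp
  qed simp
  then obtain c where c: "\<forall>y\<in>{0..l}. d y = c" by blast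
  have zero: "0 \<in> {0..l}" using x by auto
  have dc: "\<forall>y\<in>{0..l}. d y = d 0" using c zero by auto
  have "\<exists>c. \<forall>y\<in>{0..l}. f y - d 0 * y = c"
  proof (rule has_field_derivative_zero_constant)
    fix y assume y: "y \<in> {0..l}"
    then have fy: "(f has_real_derivative d y) (at y within {0..l})" using ode by blast
    have "((\<lambda>y. f y - d 0 * y) has_real_derivative d y - d 0 * 1) (at y within {0..l})"
      by (intro DERIV_diff fy DERIV_cmult DERIV_ident)
    then show "((\<lambda>y. f y - d 0 * y) has_real_derivative 0) (at y within {0..l})"
      using dc[rule_format, OF y] by simp
  qed simp
  then obtain c' where c': "\<forall>y\<in>{0..l}. f y - d 0 * y = c'" by blast
  have "f x - d 0 * x = c'" "f 0 - d 0 * 0 = c'" using c'[rule_format, OF x] c'[rule_format, OF zero] by auto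
  then show ?thesis using dc[rule_format, OF x] by simp
qed

section \<open>Combinatorics of the ring\<close>

lemma ring_succ_inj:
  fixes i j r :: nat
  assumes i: "i < r" and j: "j < r" and eq: "(i + 1) mod r = (j + 1) mod r"
  shows "i = j"
proof -
  have "(i + 1) mod r = (if i + 1 = r then 0 else i + 1)" "(j + 1) mod r = (if j + 1 = r then 0 else j + 1)"
    using i j by auto
  then show ?thesis using eq by (auto split: if_splits)
qed

lemma ring_succ_surj:
  fixes v r :: nat
  assumes "v < r"
  shows "\<exists>j<r. (j + 1) mod r = v"
proof (intro exI conjI)
  show "(v + r - 1) mod r < r" using assms by simp
  have "((v + r - 1) mod r + 1) mod r = (v + r) mod r"
    using assms by (simp add: mod_Suc_eq)
  then show "((v + r - 1) mod r + 1) mod r = v" using assms by simp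
qed

lemma div2_eq_iff: "(e::nat) div 2 = j \<longleftrightarrow> e = 2 * j \<or> e = 2 * j + 1"
  by presburger

lemma ring_edges_out:
  fixes v r :: nat
  shows "v < r \<Longrightarrow> {e. e < 2*r \<and> e div 2 = v} = {2 * v, 2 * v + 1}"
  unfolding div2_eq_iff by auto

lemma ring_edges_in:
  fixes j r :: nat
  assumes j: "j < r"
  shows "{e. e < 2*r \<and> (e div 2 + 1) mod r = (j + 1) mod r} = {2 * j, 2 * j + 1}"
proof -
  have "e < 2*r \<and> (e div 2 + 1) mod r = (j + 1) mod r \<longleftrightarrow> e div 2 = j" for e
    using ring_succ_inj[of "e div 2" r j] j by auto
  then show ?thesis unfolding div2_eq_iff by auto
qed

abbreviation ring_eigenfunction :: "nat \<Rightarrow> (nat \<Rightarrow> real) \<Rightarrow> real \<Rightarrow> (nat \<Rightarrow> real \<Rightarrow> real) \<Rightarrow> bool" where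
  "ring_eigenfunction r lam k \<equiv> std_eigenfunction (2*r) (ring_tl r) (ring_hd r) (ring_len lam) k"

abbreviation on_ring :: "nat \<Rightarrow> (nat \<Rightarrow> real) \<Rightarrow> nat \<Rightarrow> real \<Rightarrow> bool" where
  "on_ring r lam e x \<equiv> e < 2*r \<and> 0 \<le> x \<and> x \<le> lam (e div 2) / 2"

text \<open>Vertex (j + 1) mod r is the head of the edges 2j, 2j+1 of loop j and the tail of the edges of
  the next loop, so the vertex conditions can be read off loop by loop.\<close>

lemma ring_continuity_iff:
  fixes r :: nat and F :: "nat \<Rightarrow> real \<Rightarrow> real"
  assumes r: "r > 0"
  shows "(\<forall>v. \<exists>c. \<forall>e<2*r. (e div 2 = v \<longrightarrow> F e 0 = c) \<and>
                          ((e div 2 + 1) mod r = v \<longrightarrow> F e (lam (e div 2) / 2) = c))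
    \<longleftrightarrow> (\<forall>j<r. F (2*j) 0 = F (2*j+1) 0 \<and> F (2*j) (lam j / 2) = F (2*j+1) (lam j / 2) \<and>
                F (2*j) (lam j / 2) = F (2 * ((j + 1) mod r)) 0)"
    (is "?L \<longleftrightarrow> ?R")
proof
  assume L: ?L
  show ?R
  proof (intro allI impI)
    fix j assume j: "j < r"
    obtain c where c: "\<forall>e<2*r. (e div 2 = j \<longrightarrow> F e 0 = c) \<and>
                               ((e div 2 + 1) mod r = j \<longrightarrow> F e (lam (e div 2) / 2) = c)"
      using L by blast
    obtain c' where c': "\<forall>e<2*r. (e div 2 = (j + 1) mod r \<longrightarrow> F e 0 = c') \<and>
                         ((e div 2 + 1) mod r = (j + 1) mod r \<longrightarrow> F e (lam (e div 2) / 2) = c')"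
      using L by blast
    have "F (2*j) 0 = c" "F (2*j+1) 0 = c" using c[rule_format, of "2*j"] c[rule_format, of "2*j+1"] j by auto
    moreover have "F (2*j) (lam j / 2) = c'" "F (2*j+1) (lam j / 2) = c'"
      using c'[rule_format, of "2*j"] c'[rule_format, of "2*j+1"] j by auto
    moreover have "F (2 * ((j + 1) mod r)) 0 = c'" using c'[rule_format, of "2 * ((j + 1) mod r)"] r by auto
    ultimately show "F (2*j) 0 = F (2*j+1) 0 \<and> F (2*j) (lam j / 2) = F (2*j+1) (lam j / 2) \<and>
                     F (2*j) (lam j / 2) = F (2 * ((j + 1) mod r)) 0"
      by simp
  qed
next
  assume R: ?R
  show ?L
  proof
    fix v
    show "\<exists>c. \<forall>e<2*r. (e div 2 = v \<longrightarrow> F e 0 = c) \<and>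
                     ((e div 2 + 1) mod r = v \<longrightarrow> F e (lam (e div 2) / 2) = c)"
    proof (intro exI allI impI conjI)
      fix e assume e: "e < 2*r"
      define j where "j = e div 2"
      have "j < r" using e j_def by auto
      then have Rj: "F (2*j) 0 = F (2*j+1) 0" "F (2*j) (lam j / 2) = F (2*j+1) (lam j / 2)"
          "F (2*j) (lam j / 2) = F (2 * ((j + 1) mod r)) 0"
        using R by blast+
      have "e = 2*j \<or> e = 2*j+1" using div2_eq_iff j_def by blast
      then have F0: "F e 0 = F (2*j) 0" and Fl: "F e (lam j / 2) = F (2 * ((j + 1) mod r)) 0"
        using Rj by auto
      show "F e 0 = F (2 * v) 0" if "e div 2 = v" using F0 that j_def by simp
      show "F e (lam (e div 2) / 2) = F (2 * v) 0" if "(e div 2 + 1) mod r = v"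
        using Fl that j_def by simp
    qed
  qed
qed

lemma ring_kirchhoff_iff:
  fixes r :: nat and D :: "nat \<Rightarrow> real \<Rightarrow> real"
  assumes r: "r > 0"
  shows "(\<forall>v. (\<Sum>e | e < 2*r \<and> e div 2 = v. - D e 0)
             + (\<Sum>e | e < 2*r \<and> (e div 2 + 1) mod r = v. D e (lam (e div 2) / 2)) = 0)
    \<longleftrightarrow> (\<forall>j<r. D (2 * ((j + 1) mod r)) 0 + D (2 * ((j + 1) mod r) + 1) 0
                 = D (2*j) (lam j / 2) + D (2*j+1) (lam j / 2))"
    (is "(\<forall>v. ?P v) \<longleftrightarrow> (\<forall>j<r. ?Q j)")
proof -
  have succ: "?P ((j + 1) mod r) \<longleftrightarrow> ?Q j" if j: "j < r" for j
  proof -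
    have "(j + 1) mod r < r" using r by simp
    then show ?thesis
      unfolding ring_edges_out[OF \<open>(j + 1) mod r < r\<close>] ring_edges_in[OF j] by auto
  qed
  have off: "?P v" if "\<not> v < r" for v
  proof -
    have "{e. e < 2*r \<and> e div 2 = v} = {}" "{e. e < 2*r \<and> (e div 2 + 1) mod r = v} = {}"
      using that r by auto
    then show ?thesis by (simp only: sum.empty)
  qed
  show ?thesis
  proof
    assume "\<forall>v. ?P v"
    then show "\<forall>j<r. ?Q j" using succ by blast
  next
    assume Q: "\<forall>j<r. ?Q j"
    show "\<forall>v. ?P v"
    proof
      fix v
      show "?P v"
      proof (cases "v < r")
        case True
        then obtain j where "j < r" "(j + 1) mod r = v" using ring_succ_surj by blast
        then show ?thesis using succ Q by blast
      qed (rule off)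
    qed
  qed
qed

lemma ring_eigenfunction_iff:
  fixes r :: nat and lam :: "nat \<Rightarrow> real" and F :: "nat \<Rightarrow> real \<Rightarrow> real"
  assumes r: "r > 0"
  shows "ring_eigenfunction r lam k F \<longleftrightarrow>
    (\<forall>e x. \<not> on_ring r lam e x \<longrightarrow> F e x = 0) \<and>
    (\<exists>D. (\<forall>e<2*r. \<forall>x\<in>{0..lam (e div 2) / 2}.
            (F e has_real_derivative D e x) (at x within {0..lam (e div 2) / 2}) \<and>
            (D e has_real_derivative -(k\<^sup>2 * F e x)) (at x within {0..lam (e div 2) / 2})) \<and>
        (\<forall>j<r. F (2*j) 0 = F (2*j+1) 0 \<and> F (2*j) (lam j / 2) = F (2*j+1) (lam j / 2) \<and>
               F (2*j) (lam j / 2) = F (2 * ((j + 1) mod r)) 0) \<and>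
        (\<forall>j<r. D (2 * ((j + 1) mod r)) 0 + D (2 * ((j + 1) mod r) + 1) 0
               = D (2*j) (lam j / 2) + D (2*j+1) (lam j / 2)))"
proof -
  have "(\<forall>e x. (e \<ge> 2*r \<or> x \<notin> {0..lam (e div 2) / 2}) \<longrightarrow> F e x = 0)
        \<longleftrightarrow> (\<forall>e x. \<not> on_ring r lam e x \<longrightarrow> F e x = 0)"
    by auto
  then show ?thesis
    unfolding std_eigenfunction_def ring_tl_def ring_hd_def ring_len_def
    by (simp only: ring_continuity_iff[OF r] ring_kirchhoff_iff[OF r])
qed

section \<open>Eigenfunctions of the ring\<close>

text \<open>The arc-length position of vertex j on the cycle of length L/2 formed by one edge of each loop.\<close>

definition ring_pos :: "(nat \<Rightarrow> real) \<Rightarrow> nat \<Rightarrow> real" where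
  "ring_pos lam j = (\<Sum>i<j. lam i) / 2"

lemma ring_pos_0 [simp]: "ring_pos lam 0 = 0"
  unfolding ring_pos_def by simp

lemma ring_pos_Suc: "ring_pos lam (Suc j) = ring_pos lam j + lam j / 2"
  unfolding ring_pos_def by (simp add: field_simps)

lemma ring_pos_pos:
  assumes "r > 0" "\<forall>j<r. lam j > 0"
  shows "ring_pos lam r > 0"
  unfolding ring_pos_def using assms by (auto intro!: sum_pos)

definition ring_wave :: "nat \<Rightarrow> (nat \<Rightarrow> real) \<Rightarrow> real \<Rightarrow> real \<Rightarrow> real \<Rightarrow> nat \<Rightarrow> real \<Rightarrow> real" where
  "ring_wave r lam k A B e x =
     (if on_ring r lam e x
      then A * cos (k * (ring_pos lam (e div 2) + x)) + B * sin (k * (ring_pos lam (e div 2) + x))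
      else 0)"

definition loop_mode :: "nat \<Rightarrow> (nat \<Rightarrow> real) \<Rightarrow> real \<Rightarrow> nat \<Rightarrow> nat \<Rightarrow> real \<Rightarrow> real" where
  "loop_mode r lam k j e x = (if on_ring r lam e x \<and> e div 2 = j then (-1) ^ e * sin (k * x) else 0)"

lemma ring_eigenfunctionI:
  fixes F \<phi> \<psi> :: "nat \<Rightarrow> real \<Rightarrow> real"
  assumes r: "r > 0" and lampos: "\<forall>j<r. lam j > 0"
    and F: "\<And>e x. F e x = (if on_ring r lam e x then \<phi> e x else 0)"
    and ode: "\<And>e x. (\<phi> e has_real_derivative \<psi> e x) (at x) \<and>
                     (\<psi> e has_real_derivative -(k\<^sup>2 * \<phi> e x)) (at x)"
    and cont: "\<And>j. j < r \<Longrightarrow> \<phi> (2*j) 0 = \<phi> (2*j+1) 0 \<and> \<phi> (2*j) (lam j / 2) = \<phi> (2*j+1) (lam j / 2) \<and>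
                            \<phi> (2*j) (lam j / 2) = \<phi> (2 * ((j + 1) mod r)) 0"
    and kirchhoff: "\<And>j. j < r \<Longrightarrow> \<psi> (2 * ((j + 1) mod r)) 0 + \<psi> (2 * ((j + 1) mod r) + 1) 0
                                 = \<psi> (2*j) (lam j / 2) + \<psi> (2*j+1) (lam j / 2)"
  shows "ring_eigenfunction r lam k F"
  unfolding ring_eigenfunction_iff[OF r]
proof (intro conjI exI[of _ \<psi>])
  show "\<forall>e x. \<not> on_ring r lam e x \<longrightarrow> F e x = 0" using F by simp
  show "\<forall>e<2 * r. \<forall>x\<in>{0..lam (e div 2) / 2}.
          (F e has_real_derivative \<psi> e x) (at x within {0..lam (e div 2) / 2}) \<and>
          (\<psi> e has_real_derivative - (k\<^sup>2 * F e x)) (at x within {0..lam (e div 2) / 2})"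
  proof (intro allI impI ballI conjI)
    fix e x assume e: "e < 2*r" and x: "x \<in> {0..lam (e div 2) / 2}"
    have eq: "\<phi> e x' = F e x'" if "x' \<in> {0..lam (e div 2) / 2}" for x'
      using F[of e x'] e that by auto
    have "(\<phi> e has_real_derivative \<psi> e x) (at x within {0..lam (e div 2) / 2})"
      using ode has_field_derivative_at_within by blast
    then show "(F e has_real_derivative \<psi> e x) (at x within {0..lam (e div 2) / 2})"
      by (rule has_field_derivative_transform_within[where d=1]) (use x eq in auto)
    have "(\<psi> e has_real_derivative -(k\<^sup>2 * \<phi> e x)) (at x within {0..lam (e div 2) / 2})"
      using ode has_field_derivative_at_within by blast
    then show "(\<psi> e has_real_derivative -(k\<^sup>2 * F e x)) (at x within {0..lam (e div 2) / 2})"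
      using eq[OF x] by simp
  qed
  show "\<forall>j<r. F (2*j) 0 = F (2*j+1) 0 \<and> F (2*j) (lam j / 2) = F (2*j+1) (lam j / 2) \<and>
               F (2*j) (lam j / 2) = F (2 * ((j + 1) mod r)) 0"
  proof (intro allI impI)
    fix j assume j: "j < r"
    have "lam j > 0" using lampos j by auto
    moreover have "lam ((j + 1) mod r) > 0" using lampos r by auto
    ultimately have "F (2*j) 0 = \<phi> (2*j) 0" "F (2*j+1) 0 = \<phi> (2*j+1) 0"
      "F (2*j) (lam j / 2) = \<phi> (2*j) (lam j / 2)" "F (2*j+1) (lam j / 2) = \<phi> (2*j+1) (lam j / 2)"
      "F (2 * ((j + 1) mod r)) 0 = \<phi> (2 * ((j + 1) mod r)) 0"
      using F j r by simp_all
    then show "F (2*j) 0 = F (2*j+1) 0 \<and> F (2*j) (lam j / 2) = F (2*j+1) (lam j / 2) \<and>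
               F (2*j) (lam j / 2) = F (2 * ((j + 1) mod r)) 0"
      using cont[OF j] by simp
  qed
  show "\<forall>j<r. \<psi> (2 * ((j + 1) mod r)) 0 + \<psi> (2 * ((j + 1) mod r) + 1) 0
               = \<psi> (2*j) (lam j / 2) + \<psi> (2*j+1) (lam j / 2)"
    using kirchhoff by blast
qed

lemma ring_pos_succ_trig:
  assumes j: "j < r" and period: "cos (k * ring_pos lam r) = 1"
  shows "cos (k * (ring_pos lam j + lam j / 2)) = cos (k * ring_pos lam ((j + 1) mod r))"
    and "sin (k * (ring_pos lam j + lam j / 2)) = sin (k * ring_pos lam ((j + 1) mod r))"
proof -
  have "sin (k * ring_pos lam r) = 0"
    using period sin_cos_squared_add[of "k * ring_pos lam r"] by simp
  moreover have "ring_pos lam j + lam j / 2 = ring_pos lam (j + 1)" by (simp add: ring_pos_Suc)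
  moreover have "j + 1 = r \<or> (j + 1) mod r = j + 1" using j by (cases "j + 1 < r") auto
  ultimately show "cos (k * (ring_pos lam j + lam j / 2)) = cos (k * ring_pos lam ((j + 1) mod r))"
    and "sin (k * (ring_pos lam j + lam j / 2)) = sin (k * ring_pos lam ((j + 1) mod r))"
    using period by auto
qed

lemma ring_wave_eigenfunction:
  assumes r: "r > 0" and lampos: "\<forall>j<r. lam j > 0" and period: "cos (k * ring_pos lam r) = 1"
  shows "ring_eigenfunction r lam k (ring_wave r lam k A B)"
proof (rule ring_eigenfunctionI[OF r lampos,
      where \<phi> = "\<lambda>e x. A * cos (k * (ring_pos lam (e div 2) + x)) + B * sin (k * (ring_pos lam (e div 2) + x))"
        and \<psi> = "\<lambda>e x. k * (B * cos (k * (ring_pos lam (e div 2) + x)) - A * sin (k * (ring_pos lam (e div 2) + x)))"])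
  show "ring_wave r lam k A B e x = (if on_ring r lam e x
          then A * cos (k * (ring_pos lam (e div 2) + x)) + B * sin (k * (ring_pos lam (e div 2) + x)) else 0)"
    for e x
    by (simp add: ring_wave_def)
  show "((\<lambda>x. A * cos (k * (ring_pos lam (e div 2) + x)) + B * sin (k * (ring_pos lam (e div 2) + x)))
          has_real_derivative k * (B * cos (k * (ring_pos lam (e div 2) + x)) - A * sin (k * (ring_pos lam (e div 2) + x)))) (at x) \<and>
        ((\<lambda>x. k * (B * cos (k * (ring_pos lam (e div 2) + x)) - A * sin (k * (ring_pos lam (e div 2) + x))))
          has_real_derivative - (k\<^sup>2 * (A * cos (k * (ring_pos lam (e div 2) + x)) + B * sin (k * (ring_pos lam (e div 2) + x))))) (at x)"
    for e x
    by (auto intro!: derivative_eq_intros simp: power2_eq_square algebra_simps)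
  fix j assume j: "j < r"
  note wrap = ring_pos_succ_trig[OF j period]
  show "A * cos (k * (ring_pos lam (2 * j div 2) + 0)) + B * sin (k * (ring_pos lam (2 * j div 2) + 0)) =
          A * cos (k * (ring_pos lam ((2 * j + 1) div 2) + 0)) + B * sin (k * (ring_pos lam ((2 * j + 1) div 2) + 0)) \<and>
        A * cos (k * (ring_pos lam (2 * j div 2) + lam j / 2)) + B * sin (k * (ring_pos lam (2 * j div 2) + lam j / 2)) =
          A * cos (k * (ring_pos lam ((2 * j + 1) div 2) + lam j / 2)) + B * sin (k * (ring_pos lam ((2 * j + 1) div 2) + lam j / 2)) \<and>
        A * cos (k * (ring_pos lam (2 * j div 2) + lam j / 2)) + B * sin (k * (ring_pos lam (2 * j div 2) + lam j / 2)) =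
          A * cos (k * (ring_pos lam (2 * ((j + 1) mod r) div 2) + 0)) + B * sin (k * (ring_pos lam (2 * ((j + 1) mod r) div 2) + 0))"
    using wrap by simp
  show "k * (B * cos (k * (ring_pos lam (2 * ((j + 1) mod r) div 2) + 0)) - A * sin (k * (ring_pos lam (2 * ((j + 1) mod r) div 2) + 0))) +
        k * (B * cos (k * (ring_pos lam ((2 * ((j + 1) mod r) + 1) div 2) + 0)) - A * sin (k * (ring_pos lam ((2 * ((j + 1) mod r) + 1) div 2) + 0))) =
        k * (B * cos (k * (ring_pos lam (2 * j div 2) + lam j / 2)) - A * sin (k * (ring_pos lam (2 * j div 2) + lam j / 2))) +
        k * (B * cos (k * (ring_pos lam ((2 * j + 1) div 2) + lam j / 2)) - A * sin (k * (ring_pos lam ((2 * j + 1) div 2) + lam j / 2)))"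
    using wrap by simp
qed

lemma loop_mode_eigenfunction:
  assumes r: "r > 0" and lampos: "\<forall>j<r. lam j > 0" and resonant: "sin (k * (lam i / 2)) = 0"
  shows "ring_eigenfunction r lam k (loop_mode r lam k i)"
proof (rule ring_eigenfunctionI[OF r lampos,
      where \<phi> = "\<lambda>e x. if e div 2 = i then (-1) ^ e * sin (k * x) else 0"
        and \<psi> = "\<lambda>e x. if e div 2 = i then (-1) ^ e * (k * cos (k * x)) else 0"])
  show "loop_mode r lam k i e x = (if on_ring r lam e x then (if e div 2 = i then (-1) ^ e * sin (k * x) else 0) else 0)"
    for e x
    unfolding loop_mode_def by (cases "e div 2 = i") simp_all
  show "((\<lambda>x. if e div 2 = i then (-1) ^ e * sin (k * x) else 0)
          has_real_derivative (if e div 2 = i then (-1) ^ e * (k * cos (k * x)) else 0)) (at x) \<and>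
        ((\<lambda>x. if e div 2 = i then (-1) ^ e * (k * cos (k * x)) else 0)
          has_real_derivative - (k\<^sup>2 * (if e div 2 = i then (-1) ^ e * sin (k * x) else 0))) (at x)"
    for e x
    by (cases "e div 2 = i") (auto intro!: derivative_eq_intros simp: power2_eq_square)
  fix j assume "j < r"
  show "(if 2 * j div 2 = i then (-1) ^ (2 * j) * sin (k * 0) else 0) =
          (if (2 * j + 1) div 2 = i then (-1) ^ (2 * j + 1) * sin (k * 0) else 0) \<and>
        (if 2 * j div 2 = i then (-1) ^ (2 * j) * sin (k * (lam j / 2)) else 0) =
          (if (2 * j + 1) div 2 = i then (-1) ^ (2 * j + 1) * sin (k * (lam j / 2)) else 0) \<and>
        (if 2 * j div 2 = i then (-1) ^ (2 * j) * sin (k * (lam j / 2)) else 0) =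
          (if 2 * ((j + 1) mod r) div 2 = i then (-1) ^ (2 * ((j + 1) mod r)) * sin (k * 0) else 0)"
    using resonant by auto
  show "(if 2 * ((j + 1) mod r) div 2 = i then (-1) ^ (2 * ((j + 1) mod r)) * (k * cos (k * 0)) else 0) +
        (if (2 * ((j + 1) mod r) + 1) div 2 = i then (-1) ^ (2 * ((j + 1) mod r) + 1) * (k * cos (k * 0)) else 0) =
        (if 2 * j div 2 = i then (-1) ^ (2 * j) * (k * cos (k * (lam j / 2))) else 0) +
        (if (2 * j + 1) div 2 = i then (-1) ^ (2 * j + 1) * (k * cos (k * (lam j / 2))) else 0)"
    by simp
qed

lemma sum_loop_mode:
  assumes "finite J"
  shows "(\<Sum>j\<in>J. \<alpha> j * loop_mode r lam k j e x)
       = (if e div 2 \<in> J then \<alpha> (e div 2) * loop_mode r lam k (e div 2) e x else 0)"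
proof -
  have "(\<Sum>j\<in>J. \<alpha> j * loop_mode r lam k j e x)
      = (\<Sum>j\<in>J. if j = e div 2 then \<alpha> (e div 2) * loop_mode r lam k (e div 2) e x else 0)"
    by (rule sum.cong) (simp_all add: loop_mode_def)
  then show ?thesis using assms by simp
qed

section \<open>Every eigenfunction is a wave plus loop modes\<close>

lemma ring_eigenfunction_edge_coefficients:
  fixes F :: "nat \<Rightarrow> real \<Rightarrow> real"
  assumes r: "r > 0" and lampos: "\<forall>j<r. lam j > 0" and k: "k \<noteq> 0"
    and F: "ring_eigenfunction r lam k F"
  obtains a b :: "nat \<Rightarrow> real" where
    "\<And>e x. on_ring r lam e x \<Longrightarrow> F e x = a e * cos (k * x) + b e * sin (k * x)"
    "\<And>j. j < r \<Longrightarrow> a (2*j+1) = a (2*j)"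
    "\<And>j. j < r \<Longrightarrow> a (2*j) * cos (k * (lam j / 2)) + b (2*j) * sin (k * (lam j / 2))
                   = a (2*j+1) * cos (k * (lam j / 2)) + b (2*j+1) * sin (k * (lam j / 2))"
    "\<And>j. j < r \<Longrightarrow> a (2 * ((j + 1) mod r)) = a (2*j) * cos (k * (lam j / 2)) + b (2*j) * sin (k * (lam j / 2))"
    "\<And>j. j < r \<Longrightarrow> b (2 * ((j + 1) mod r)) + b (2 * ((j + 1) mod r) + 1)
                   = (b (2*j) + b (2*j+1)) * cos (k * (lam j / 2)) - (a (2*j) + a (2*j+1)) * sin (k * (lam j / 2))"
proof -
  obtain D where ode: "\<forall>e<2*r. \<forall>x\<in>{0..lam (e div 2) / 2}.
            (F e has_real_derivative D e x) (at x within {0..lam (e div 2) / 2}) \<and>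
            (D e has_real_derivative -(k\<^sup>2 * F e x)) (at x within {0..lam (e div 2) / 2})"
    and cont: "\<forall>j<r. F (2*j) 0 = F (2*j+1) 0 \<and> F (2*j) (lam j / 2) = F (2*j+1) (lam j / 2) \<and>
               F (2*j) (lam j / 2) = F (2 * ((j + 1) mod r)) 0"
    and kir: "\<forall>j<r. D (2 * ((j + 1) mod r)) 0 + D (2 * ((j + 1) mod r) + 1) 0
               = D (2*j) (lam j / 2) + D (2*j+1) (lam j / 2)"
    using F unfolding ring_eigenfunction_iff[OF r] by blast
  define a where "a e = F e 0" for e
  define b where "b e = D e 0 / k" for e
  have sol: "F e x = a e * cos (k * x) + b e * sin (k * x) \<and> D e x = k * (b e * cos (k * x) - a e * sin (k * x))"
    if e: "e < 2*r" and x: "x \<in> {0..lam (e div 2) / 2}" for e x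
  proof -
    have "\<forall>x\<in>{0..lam (e div 2) / 2}. (F e has_real_derivative D e x) (at x within {0..lam (e div 2) / 2}) \<and>
            (D e has_real_derivative -(k\<^sup>2 * F e x)) (at x within {0..lam (e div 2) / 2})"
      using ode e by blast
    then have "F e x = F e 0 * cos (k * x) + D e 0 / k * sin (k * x)"
      and "D e x = - k * F e 0 * sin (k * x) + D e 0 * cos (k * x)"
      using harmonic_solution_unique[OF k _ x] by blast+
    moreover have "D e 0 = k * b e" unfolding b_def using k by simp
    ultimately show ?thesis unfolding a_def using k by (simp add: algebra_simps)
  qed
  show thesis
  proof (rule that)
    show "F e x = a e * cos (k * x) + b e * sin (k * x)" if "on_ring r lam e x" for e x
      using sol that by simp
  next
    fix j assume j: "j < r"
    have "lam j > 0" using lampos j by blast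
    then have ends: "2*j < 2*r" "2*j+1 < 2*r" "lam j / 2 \<in> {0..lam ((2*j) div 2) / 2}"
      "lam j / 2 \<in> {0..lam ((2*j+1) div 2) / 2}" using j by auto
    note sol0 = sol[OF ends(1,3)] and sol1 = sol[OF ends(2,4)]
    have D0: "D e 0 = k * b e" for e unfolding b_def using k by simp
    have cj: "F (2*j) 0 = F (2*j+1) 0" "F (2*j) (lam j / 2) = F (2*j+1) (lam j / 2)"
      "F (2*j) (lam j / 2) = F (2 * ((j + 1) mod r)) 0"
      using cont j by blast+
    show "a (2*j+1) = a (2*j)" using cj(1) unfolding a_def by simp
    show "a (2*j) * cos (k * (lam j / 2)) + b (2*j) * sin (k * (lam j / 2))
        = a (2*j+1) * cos (k * (lam j / 2)) + b (2*j+1) * sin (k * (lam j / 2))"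
      using cj(2) sol0 sol1 by simp
    show "a (2 * ((j + 1) mod r)) = a (2*j) * cos (k * (lam j / 2)) + b (2*j) * sin (k * (lam j / 2))"
      using cj(3) sol0 unfolding a_def by simp
    have "k * (b (2 * ((j + 1) mod r)) + b (2 * ((j + 1) mod r) + 1))
        = k * ((b (2*j) + b (2*j+1)) * cos (k * (lam j / 2)) - (a (2*j) + a (2*j+1)) * sin (k * (lam j / 2)))"
      using kir j sol0 sol1 D0 by (simp add: algebra_simps)
    then show "b (2 * ((j + 1) mod r)) + b (2 * ((j + 1) mod r) + 1)
        = (b (2*j) + b (2*j+1)) * cos (k * (lam j / 2)) - (a (2*j) + a (2*j+1)) * sin (k * (lam j / 2))"
      using k by simp
  qed
qed

lemma ring_eigenfunction_loop_coefficients: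
  fixes F :: "nat \<Rightarrow> real \<Rightarrow> real"
  assumes r: "r > 0" and lampos: "\<forall>j<r. lam j > 0" and k: "k \<noteq> 0"
    and F: "ring_eigenfunction r lam k F"
  obtains p q \<alpha> :: "nat \<Rightarrow> real" where
    "\<And>e x. on_ring r lam e x \<Longrightarrow>
       F e x = p (e div 2) * cos (k * x) + (q (e div 2) + (-1) ^ e * \<alpha> (e div 2)) * sin (k * x)"
    "\<And>j. j < r \<Longrightarrow> \<alpha> j * sin (k * (lam j / 2)) = 0"
    "\<And>j. j < r \<Longrightarrow> p ((j + 1) mod r) = p j * cos (k * (lam j / 2)) + q j * sin (k * (lam j / 2))"
    "\<And>j. j < r \<Longrightarrow> q ((j + 1) mod r) = - p j * sin (k * (lam j / 2)) + q j * cos (k * (lam j / 2))"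
proof -
  obtain a b where F_eq: "\<And>e x. on_ring r lam e x \<Longrightarrow> F e x = a e * cos (k * x) + b e * sin (k * x)"
    and start: "\<And>j. j < r \<Longrightarrow> a (2*j+1) = a (2*j)"
    and ends: "\<And>j. j < r \<Longrightarrow> a (2*j) * cos (k * (lam j / 2)) + b (2*j) * sin (k * (lam j / 2))
                   = a (2*j+1) * cos (k * (lam j / 2)) + b (2*j+1) * sin (k * (lam j / 2))"
    and a_succ: "\<And>j. j < r \<Longrightarrow> a (2 * ((j + 1) mod r)) = a (2*j) * cos (k * (lam j / 2)) + b (2*j) * sin (k * (lam j / 2))"
    and b_succ: "\<And>j. j < r \<Longrightarrow> b (2 * ((j + 1) mod r)) + b (2 * ((j + 1) mod r) + 1)
                   = (b (2*j) + b (2*j+1)) * cos (k * (lam j / 2)) - (a (2*j) + a (2*j+1)) * sin (k * (lam j / 2))"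
    using ring_eigenfunction_edge_coefficients[OF r lampos k F] by blast
  define p where "p j = a (2*j)" for j
  define q where "q j = (b (2*j) + b (2*j+1)) / 2" for j
  define \<alpha> where "\<alpha> j = (b (2*j) - b (2*j+1)) / 2" for j
  show thesis
  proof (rule that)
    fix e x assume on: "on_ring r lam e x"
    define j where "j = e div 2"
    have "j < r" using on j_def by auto
    have "e = 2*j \<or> e = 2*j+1" using div2_eq_iff j_def by blast
    then have "a e = p j" "b e = q j + (-1) ^ e * \<alpha> j"
      using start[OF \<open>j < r\<close>] unfolding p_def q_def \<alpha>_def by (auto simp: field_simps)
    then show "F e x = p (e div 2) * cos (k * x) + (q (e div 2) + (-1) ^ e * \<alpha> (e div 2)) * sin (k * x)"
      using F_eq[OF on] j_def by simp
  next
    fix j assume j: "j < r"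
    have b_sin: "b (2*j) * sin (k * (lam j / 2)) = b (2*j+1) * sin (k * (lam j / 2))"
      using ends[OF j] start[OF j] by simp
    then show "\<alpha> j * sin (k * (lam j / 2)) = 0"
      unfolding \<alpha>_def by (simp add: algebra_simps)
    have "q j * sin (k * (lam j / 2)) = (b (2*j) * sin (k * (lam j / 2)) + b (2*j+1) * sin (k * (lam j / 2))) / 2"
      unfolding q_def by (simp add: field_simps)
    also have "\<dots> = b (2*j) * sin (k * (lam j / 2))"
      unfolding b_sin[symmetric] by simp
    finally have "q j * sin (k * (lam j / 2)) = b (2*j) * sin (k * (lam j / 2))" .
    then show "p ((j + 1) mod r) = p j * cos (k * (lam j / 2)) + q j * sin (k * (lam j / 2))"
      using a_succ[OF j] unfolding p_def by linarith
    show "q ((j + 1) mod r) = - p j * sin (k * (lam j / 2)) + q j * cos (k * (lam j / 2))"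
      using b_succ[OF j] start[OF j] unfolding p_def q_def by (simp add: field_simps)
  qed
qed

lemma rotation_recurrence:
  fixes p q \<theta> :: "nat \<Rightarrow> real"
  assumes step: "\<And>j. j < n \<Longrightarrow> p (Suc j) = p j * cos (\<theta> j) + q j * sin (\<theta> j) \<and>
                               q (Suc j) = - p j * sin (\<theta> j) + q j * cos (\<theta> j)"
    and "j \<le> n"
  shows "p j = p 0 * cos (\<Sum>i<j. \<theta> i) + q 0 * sin (\<Sum>i<j. \<theta> i) \<and>
         q j = - p 0 * sin (\<Sum>i<j. \<theta> i) + q 0 * cos (\<Sum>i<j. \<theta> i)"
  using \<open>j \<le> n\<close>
proof (induction j)
  case 0
  then show ?case by simp
next
  case (Suc j)
  then have "j < n" by simp
  then show ?case
    using step[OF \<open>j < n\<close>] Suc.IH by (simp add: cos_add sin_add algebra_simps)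
qed

lemma rotation_fixed_point:
  fixes A B \<theta> :: real
  assumes "A = A * cos \<theta> + B * sin \<theta>" "B = - A * sin \<theta> + B * cos \<theta>" and "A \<noteq> 0 \<or> B \<noteq> 0"
  shows "cos \<theta> = 1"
proof -
  have "(A\<^sup>2 + B\<^sup>2) * (1 - cos \<theta>) = A * (A * (1 - cos \<theta>)) + B * (B * (1 - cos \<theta>))"
    by (simp add: power2_eq_square algebra_simps)
  also have "\<dots> = A * (B * sin \<theta>) + B * (- A * sin \<theta>)"
  proof -
    have "A * (1 - cos \<theta>) = B * sin \<theta>" "B * (1 - cos \<theta>) = - A * sin \<theta>"
      using assms(1,2) by (simp_all add: algebra_simps)
    then show ?thesis by simp
  qed
  also have "\<dots> = 0" by simp
  finally have "(A\<^sup>2 + B\<^sup>2) * (1 - cos \<theta>) = 0" .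
  moreover have "A\<^sup>2 + B\<^sup>2 \<noteq> 0" using assms(3) by simp
  ultimately show ?thesis by auto
qed

lemma ring_pos_eq_sum: "k * ring_pos lam j = (\<Sum>i<j. k * (lam i / 2))"
  unfolding ring_pos_def by (simp add: sum_distrib_left sum_divide_distrib)

lemma ring_rotation:
  fixes p q :: "nat \<Rightarrow> real"
  assumes r: "r > 0"
    and p_succ: "\<And>j. j < r \<Longrightarrow> p ((j + 1) mod r) = p j * cos (k * (lam j / 2)) + q j * sin (k * (lam j / 2))"
    and q_succ: "\<And>j. j < r \<Longrightarrow> q ((j + 1) mod r) = - p j * sin (k * (lam j / 2)) + q j * cos (k * (lam j / 2))"
    and "j \<le> r"
  shows "p (j mod r) = p 0 * cos (k * ring_pos lam j) + q 0 * sin (k * ring_pos lam j) \<and>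
         q (j mod r) = - p 0 * sin (k * ring_pos lam j) + q 0 * cos (k * ring_pos lam j)"
proof -
  txt \<open>Indexing by j mod r turns the closing step r - 1 \<rightarrow> 0 into an ordinary step r - 1 \<rightarrow> r.\<close>
  have "p (Suc i mod r) = p (i mod r) * cos (k * (lam i / 2)) + q (i mod r) * sin (k * (lam i / 2)) \<and>
        q (Suc i mod r) = - p (i mod r) * sin (k * (lam i / 2)) + q (i mod r) * cos (k * (lam i / 2))"
    if "i < r" for i
    using p_succ[OF that] q_succ[OF that] that by simp
  from rotation_recurrence[where p = "\<lambda>i. p (i mod r)" and q = "\<lambda>i. q (i mod r)"
      and \<theta> = "\<lambda>i. k * (lam i / 2)", OF this \<open>j \<le> r\<close>]
  show ?thesis unfolding ring_pos_eq_sum using r by simp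
qed

lemma ring_eigenfunction_decomposition:
  fixes F :: "nat \<Rightarrow> real \<Rightarrow> real"
  assumes r: "r > 0" and lampos: "\<forall>j<r. lam j > 0" and k: "k \<noteq> 0"
    and F: "ring_eigenfunction r lam k F"
  obtains A B \<alpha> where
    "\<And>e x. F e x = ring_wave r lam k A B e x + (\<Sum>j<r. \<alpha> j * loop_mode r lam k j e x)"
    "A \<noteq> 0 \<or> B \<noteq> 0 \<Longrightarrow> cos (k * ring_pos lam r) = 1"
    "\<And>j. j < r \<Longrightarrow> \<alpha> j \<noteq> 0 \<Longrightarrow> sin (k * (lam j / 2)) = 0"
proof -
  obtain p q \<alpha> where F_eq: "\<And>e x. on_ring r lam e x \<Longrightarrow>
       F e x = p (e div 2) * cos (k * x) + (q (e div 2) + (-1) ^ e * \<alpha> (e div 2)) * sin (k * x)"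
    and resonant: "\<And>j. j < r \<Longrightarrow> \<alpha> j * sin (k * (lam j / 2)) = 0"
    and p_succ: "\<And>j. j < r \<Longrightarrow> p ((j + 1) mod r) = p j * cos (k * (lam j / 2)) + q j * sin (k * (lam j / 2))"
    and q_succ: "\<And>j. j < r \<Longrightarrow> q ((j + 1) mod r) = - p j * sin (k * (lam j / 2)) + q j * cos (k * (lam j / 2))"
    using ring_eigenfunction_loop_coefficients[OF r lampos k F] by blast
  define A where "A = p 0"
  define B where "B = q 0"
  have rot: "p (j mod r) = A * cos (k * ring_pos lam j) + B * sin (k * ring_pos lam j) \<and>
             q (j mod r) = - A * sin (k * ring_pos lam j) + B * cos (k * ring_pos lam j)" if "j \<le> r" for j
    using ring_rotation[where p = p and q = q and lam = lam and k = k, OF r p_succ q_succ that]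
    unfolding A_def B_def .
  show thesis
  proof (rule that)
    fix e x
    show "F e x = ring_wave r lam k A B e x + (\<Sum>j<r. \<alpha> j * loop_mode r lam k j e x)"
    proof (cases "on_ring r lam e x")
      case False
      then have "F e x = 0" using F unfolding ring_eigenfunction_iff[OF r] by blast
      then show ?thesis using False by (auto simp: ring_wave_def loop_mode_def)
    next
      case True
      define j where "j = e div 2"
      have "j < r" using True j_def by auto
      have pj: "p j = A * cos (k * ring_pos lam j) + B * sin (k * ring_pos lam j)"
        and qj: "q j = - A * sin (k * ring_pos lam j) + B * cos (k * ring_pos lam j)"
        using rot[OF less_imp_le[OF \<open>j < r\<close>]] unfolding mod_less[OF \<open>j < r\<close>] by blast+
      have "p j * cos (k * x) + q j * sin (k * x)
          = A * cos (k * (ring_pos lam j + x)) + B * sin (k * (ring_pos lam j + x))"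
        unfolding pj qj by (simp add: distrib_left cos_add sin_add algebra_simps)
      moreover have "F e x = p j * cos (k * x) + q j * sin (k * x) + \<alpha> j * loop_mode r lam k j e x"
        using F_eq[OF True] True unfolding loop_mode_def j_def by (simp add: algebra_simps)
      ultimately show ?thesis
        using True \<open>j < r\<close> sum_loop_mode[of "{..<r}" \<alpha>] unfolding ring_wave_def j_def by simp
    qed
  next
    assume "A \<noteq> 0 \<or> B \<noteq> 0"
    moreover have "A = A * cos (k * ring_pos lam r) + B * sin (k * ring_pos lam r)"
      "B = - A * sin (k * ring_pos lam r) + B * cos (k * ring_pos lam r)"
      using rot[of r] unfolding A_def B_def by simp_all
    ultimately show "cos (k * ring_pos lam r) = 1" using rotation_fixed_point by blast
  next
    show "sin (k * (lam j / 2)) = 0" if "j < r" "\<alpha> j \<noteq> 0" for j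
      using resonant[OF that(1)] that(2) by simp
  qed
qed

lemma ring_eigenfunction_zero_edge_coefficients:
  fixes F :: "nat \<Rightarrow> real \<Rightarrow> real"
  assumes r: "r > 0" and lampos: "\<forall>j<r. lam j > 0" and F: "ring_eigenfunction r lam 0 F"
  obtains a b :: "nat \<Rightarrow> real" where
    "\<And>e x. on_ring r lam e x \<Longrightarrow> F e x = a e + b e * x"
    "\<And>j. j < r \<Longrightarrow> a (2*j+1) = a (2*j) \<and> b (2*j+1) = b (2*j)"
    "\<And>j. j < r \<Longrightarrow> a (2 * ((j + 1) mod r)) = a (2*j) + b (2*j) * (lam j / 2)"
    "\<And>j. j < r \<Longrightarrow> b (2 * ((j + 1) mod r)) + b (2 * ((j + 1) mod r) + 1) = b (2*j) + b (2*j+1)"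
proof -
  obtain D where ode: "\<forall>e<2*r. \<forall>x\<in>{0..lam (e div 2) / 2}.
            (F e has_real_derivative D e x) (at x within {0..lam (e div 2) / 2}) \<and>
            (D e has_real_derivative -((0::real)\<^sup>2 * F e x)) (at x within {0..lam (e div 2) / 2})"
    and cont: "\<forall>j<r. F (2*j) 0 = F (2*j+1) 0 \<and> F (2*j) (lam j / 2) = F (2*j+1) (lam j / 2) \<and>
               F (2*j) (lam j / 2) = F (2 * ((j + 1) mod r)) 0"
    and kir: "\<forall>j<r. D (2 * ((j + 1) mod r)) 0 + D (2 * ((j + 1) mod r) + 1) 0
               = D (2*j) (lam j / 2) + D (2*j+1) (lam j / 2)"
    using F unfolding ring_eigenfunction_iff[OF r] by blast
  define a where "a e = F e 0" for e
  define b where "b e = D e 0" for e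
  have sol: "F e x = a e + b e * x \<and> D e x = b e" if e: "e < 2*r" and x: "x \<in> {0..lam (e div 2) / 2}" for e x
  proof -
    have "\<forall>x\<in>{0..lam (e div 2) / 2}. (F e has_real_derivative D e x) (at x within {0..lam (e div 2) / 2}) \<and>
            (D e has_real_derivative -((0::real)\<^sup>2 * F e x)) (at x within {0..lam (e div 2) / 2})"
      using ode e by blast
    from affine_solution_unique[OF this x] show ?thesis unfolding a_def b_def .
  qed
  show thesis
  proof (rule that)
    show "F e x = a e + b e * x" if "on_ring r lam e x" for e x
      using sol that by simp
  next
    fix j assume j: "j < r"
    have "lam j > 0" using lampos j by blast
    then have ends: "2*j < 2*r" "2*j+1 < 2*r" "lam j / 2 \<in> {0..lam ((2*j) div 2) / 2}"
      "lam j / 2 \<in> {0..lam ((2*j+1) div 2) / 2}" using j by auto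
    note sol0 = sol[OF ends(1,3)] and sol1 = sol[OF ends(2,4)]
    have cj: "F (2*j) 0 = F (2*j+1) 0" "F (2*j) (lam j / 2) = F (2*j+1) (lam j / 2)"
      "F (2*j) (lam j / 2) = F (2 * ((j + 1) mod r)) 0"
      using cont j by blast+
    have "a (2*j+1) = a (2*j)" using cj(1) unfolding a_def by simp
    moreover have "b (2*j) * (lam j / 2) = b (2*j+1) * (lam j / 2)"
      using cj(2) sol0 sol1 \<open>a (2*j+1) = a (2*j)\<close> by simp
    ultimately show "a (2*j+1) = a (2*j) \<and> b (2*j+1) = b (2*j)" using \<open>lam j > 0\<close> by simp
    show "a (2 * ((j + 1) mod r)) = a (2*j) + b (2*j) * (lam j / 2)"
      using cj(3) sol0 unfolding a_def by simp
    show "b (2 * ((j + 1) mod r)) + b (2 * ((j + 1) mod r) + 1) = b (2*j) + b (2*j+1)"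
      using kir j sol0 sol1 unfolding b_def by simp
  qed
qed

lemma ring_eigenfunction_zero_constant:
  fixes F :: "nat \<Rightarrow> real \<Rightarrow> real"
  assumes r: "r > 0" and lampos: "\<forall>j<r. lam j > 0" and F: "ring_eigenfunction r lam 0 F"
  obtains A where "\<And>e x. F e x = ring_wave r lam 0 A 0 e x"
proof -
  obtain a b where F_eq: "\<And>e x. on_ring r lam e x \<Longrightarrow> F e x = a e + b e * x"
    and parallel: "\<And>j. j < r \<Longrightarrow> a (2*j+1) = a (2*j) \<and> b (2*j+1) = b (2*j)"
    and a_succ: "\<And>j. j < r \<Longrightarrow> a (2 * ((j + 1) mod r)) = a (2*j) + b (2*j) * (lam j / 2)"
    and b_succ: "\<And>j. j < r \<Longrightarrow> b (2 * ((j + 1) mod r)) + b (2 * ((j + 1) mod r) + 1) = b (2*j) + b (2*j+1)"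
    using ring_eigenfunction_zero_edge_coefficients[OF r lampos F] by blast
  have linear: "b (2 * (j mod r)) = b 0 \<and> a (2 * (j mod r)) = a 0 + b 0 * ring_pos lam j" if "j \<le> r" for j
    using that
  proof (induction j)
    case 0
    then show ?case by simp
  next
    case (Suc j)
    then have j: "j < r" and IH: "b (2 * j) = b 0 \<and> a (2 * j) = a 0 + b 0 * ring_pos lam j" by simp_all
    have "b (2 * ((j + 1) mod r)) = b (2*j)"
      using b_succ[OF j] parallel[OF j] parallel[of "(j + 1) mod r"] r by simp
    then show ?case using IH a_succ[OF j] by (simp add: ring_pos_Suc algebra_simps)
  qed
  have "b 0 * ring_pos lam r = 0" using linear[of r] by simp
  then have b0: "b 0 = 0" using ring_pos_pos[OF r lampos] by simp
  show thesis
  proof (rule that)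
    fix e x
    show "F e x = ring_wave r lam 0 (a 0) 0 e x"
    proof (cases "on_ring r lam e x")
      case False
      then have "F e x = 0" using F unfolding ring_eigenfunction_iff[OF r] by blast
      then show ?thesis using False by (auto simp: ring_wave_def)
    next
      case True
      define j where "j = e div 2"
      have "j < r" using True j_def by auto
      moreover have "e = 2*j \<or> e = 2*j+1" using div2_eq_iff j_def by blast
      ultimately have "a e = a 0" "b e = 0"
        using linear[of j] parallel[of j] b0 by auto
      then show ?thesis using F_eq[OF True] True by (simp add: ring_wave_def)
    qed
  qed
qed

section \<open>Dimension of the eigenspaces\<close>

lemma sin_zero_imp_pi_le:
  fixes t :: real
  assumes "t > 0" and "sin t = 0"
  shows "pi \<le> t"
  using sin_gt_zero[of t] assms by force

lemma ring_wave_linear: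
  "A * ring_wave r lam k 1 0 e x + B * ring_wave r lam k 0 1 e x = ring_wave r lam k A B e x"
  by (simp add: ring_wave_def)

lemma ring_wave_loop_modes_unique:
  assumes r: "r > 0" and lampos: "\<forall>j<r. lam j > 0" and k: "k > 0"
    and J: "J \<subseteq> {j. j < r \<and> sin (k * (lam j / 2)) = 0}"
    and zero: "\<And>e x. ring_wave r lam k A B e x + (\<Sum>j\<in>J. \<alpha> j * loop_mode r lam k j e x) = 0"
  shows "A = 0" and "B = 0" and "\<And>j. j \<in> J \<Longrightarrow> \<alpha> j = 0"
proof -
  have "finite J" using J finite_subset[of J "{..<r}"] by auto
  note modes = sum_loop_mode[OF \<open>finite J\<close>, of \<alpha> r lam k]
  txt \<open>At x0 every mode of a resonant loop takes the values \<plusminus>1, and x0 lies on every resonant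
    loop because k \<lambda>_j / 2 \<ge> \<pi> there.\<close>
  define x0 where "x0 = pi / (2 * k)"
  have "k * x0 = pi / 2" "x0 > 0" unfolding x0_def using k by simp_all
  then have "sin (k * x0) = 1" by (simp only: sin_pi_half)
  have x0_le: "x0 \<le> lam j / 2" if "j \<in> J" for j
  proof -
    have "j < r" and resonant: "sin (k * (lam j / 2)) = 0" using J that by auto
    then have "0 < k * (lam j / 2)" using k lampos by simp
    then have "pi \<le> k * (lam j / 2)" using resonant by (rule sin_zero_imp_pi_le)
    then have "k * x0 \<le> k * (lam j / 2)" using \<open>k * x0 = pi / 2\<close> pi_gt_zero by linarith
    then show ?thesis using k by simp
  qed
  show \<alpha>0: "\<alpha> j = 0" if "j \<in> J" for j
  proof -
    have "j < r" using J that by auto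
    have "on_ring r lam (2*j) x0" "on_ring r lam (2*j+1) x0" using x0_le[OF that] \<open>x0 > 0\<close> \<open>j < r\<close> by auto
    then have "loop_mode r lam k j (2*j) x0 = 1" "loop_mode r lam k j (2*j+1) x0 = -1"
      and "ring_wave r lam k A B (2*j) x0 = ring_wave r lam k A B (2*j+1) x0"
      using \<open>sin (k * x0) = 1\<close> by (simp_all add: loop_mode_def ring_wave_def)
    moreover have "ring_wave r lam k A B (2*j) x0 + \<alpha> j * loop_mode r lam k j (2*j) x0 = 0"
      and "ring_wave r lam k A B (2*j+1) x0 + \<alpha> j * loop_mode r lam k j (2*j+1) x0 = 0"
      using zero[of "2*j" x0] zero[of "2*j+1" x0] that unfolding modes by simp_all
    ultimately have "ring_wave r lam k A B (2*j) x0 + \<alpha> j = 0" "ring_wave r lam k A B (2*j) x0 - \<alpha> j = 0"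
      by simp_all
    then show ?thesis by simp
  qed
  have "lam 0 > 0" using lampos r by simp
  have waves: "ring_wave r lam k A B 0 x = 0" if "0 \<le> x" "x \<le> lam 0 / 2" for x
    using zero[of 0 x] modes \<alpha>0 by auto
  then show "A = 0" using waves[of 0] \<open>lam 0 > 0\<close> r by (simp add: ring_wave_def)
  define x1 where "x1 = min (lam 0 / 2) x0"
  have "0 < x1" "x1 \<le> x0" "x1 \<le> lam 0 / 2" unfolding x1_def using \<open>x0 > 0\<close> \<open>lam 0 > 0\<close> by auto
  have "0 < k * x1" using \<open>0 < x1\<close> k by simp
  have "k * x1 \<le> k * x0" using \<open>x1 \<le> x0\<close> k by (intro mult_left_mono) auto
  then have "k * x1 < pi" using \<open>k * x0 = pi / 2\<close> pi_gt_zero by linarith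
  with \<open>0 < k * x1\<close> have "sin (k * x1) > 0" by (rule sin_gt_zero)
  moreover have "ring_wave r lam k A B 0 x1 = 0"
    using waves \<open>0 < x1\<close> \<open>x1 \<le> lam 0 / 2\<close> by simp
  then have "B * sin (k * x1) = 0"
    using \<open>A = 0\<close> \<open>0 < x1\<close> \<open>x1 \<le> lam 0 / 2\<close> r by (simp add: ring_wave_def)
  ultimately show "B = 0" by simp
qed

interpretation fun_space: vector_space "\<lambda>(c::real) (F::nat \<Rightarrow> real \<Rightarrow> real). \<lambda>e x. c * F e x"
  by unfold_locales (simp_all add: fun_eq_iff algebra_simps)

lemma sum_fun_apply2: "(sum g A) e x = (\<Sum>a\<in>A. g a e x)"
  for g :: "'b \<Rightarrow> nat \<Rightarrow> real \<Rightarrow> real"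
  by (induction A rule: infinite_finite_induct) auto

lemma scale_in_span:
  assumes "c \<noteq> 0 \<Longrightarrow> v \<in> S"
  shows "(\<lambda>e x. c * v e x) \<in> fun_space.span S"
proof (cases "c = 0")
  case True
  then have "(\<lambda>e x. c * v e x) = 0" by (simp add: fun_eq_iff)
  then show ?thesis by (simp only: fun_space.span_zero)
next
  case False
  then show ?thesis using assms fun_space.span_base fun_space.span_scale by blast
qed

lemma sum_single_loop_mode:
  assumes "finite J" "j \<in> J"
  shows "(\<Sum>i\<in>J. (if i = j then c else 0) * loop_mode r lam k i e x) = c * loop_mode r lam k j e x"
proof -
  have "(\<Sum>i\<in>J. (if i = j then c else 0) * loop_mode r lam k i e x)
      = (\<Sum>i\<in>J. if i = j then c * loop_mode r lam k j e x else 0)"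
    by (rule sum.cong) auto
  then show ?thesis using assms by simp
qed

lemma ring_basis_distinct:
  assumes r: "r > 0" and lampos: "\<forall>j<r. lam j > 0" and k: "k > 0"
    and J: "J \<subseteq> {j. j < r \<and> sin (k * (lam j / 2)) = 0}"
  shows "ring_wave r lam k 1 0 \<noteq> ring_wave r lam k 0 1"
    and "ring_wave r lam k 1 0 \<notin> loop_mode r lam k ` J"
    and "ring_wave r lam k 0 1 \<notin> loop_mode r lam k ` J"
    and "inj_on (loop_mode r lam k) J"
proof -
  have "finite J" using J finite_subset[of J "{..<r}"] by auto
  note unique = ring_wave_loop_modes_unique[OF r lampos k J]
  note single = sum_single_loop_mode[OF \<open>finite J\<close>, of _ _ r lam k]
  show "ring_wave r lam k 1 0 \<noteq> ring_wave r lam k 0 1"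
  proof
    assume eq: "ring_wave r lam k 1 0 = ring_wave r lam k 0 1"
    have "ring_wave r lam k 1 (-1) e x + (\<Sum>j\<in>J. 0 * loop_mode r lam k j e x) = 0" for e x
      using ring_wave_linear[of 1 r lam k e x "-1"] eq by simp
    from unique(1)[OF this] show False by simp
  qed
  show "ring_wave r lam k 1 0 \<notin> loop_mode r lam k ` J"
  proof
    assume "ring_wave r lam k 1 0 \<in> loop_mode r lam k ` J"
    then obtain j where "j \<in> J" and eq: "ring_wave r lam k 1 0 = loop_mode r lam k j" by blast
    have "ring_wave r lam k 1 0 e x + (\<Sum>i\<in>J. (if i = j then -1 else 0) * loop_mode r lam k i e x) = 0" for e x
      using single[OF \<open>j \<in> J\<close>] eq by simp
    from unique(1)[OF this] show False by simp
  qed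
  show "ring_wave r lam k 0 1 \<notin> loop_mode r lam k ` J"
  proof
    assume "ring_wave r lam k 0 1 \<in> loop_mode r lam k ` J"
    then obtain j where "j \<in> J" and eq: "ring_wave r lam k 0 1 = loop_mode r lam k j" by blast
    have "ring_wave r lam k 0 1 e x + (\<Sum>i\<in>J. (if i = j then -1 else 0) * loop_mode r lam k i e x) = 0" for e x
      using single[OF \<open>j \<in> J\<close>] eq by simp
    from unique(2)[OF this] show False by simp
  qed
  show "inj_on (loop_mode r lam k) J"
  proof (rule inj_onI, rule ccontr)
    fix i j assume "i \<in> J" "j \<in> J" and eq: "loop_mode r lam k i = loop_mode r lam k j" and "i \<noteq> j"
    define \<alpha> :: "nat \<Rightarrow> real" where "\<alpha> l = (if l = i then 1 else 0) + (if l = j then -1 else 0)" for l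
    have "(\<Sum>l\<in>J. \<alpha> l * loop_mode r lam k l e x)
        = (\<Sum>l\<in>J. (if l = i then 1 else 0) * loop_mode r lam k l e x)
          + (\<Sum>l\<in>J. (if l = j then -1 else 0) * loop_mode r lam k l e x)" for e x
      unfolding \<alpha>_def by (simp add: distrib_right sum.distrib)
    then have "ring_wave r lam k 0 0 e x + (\<Sum>l\<in>J. \<alpha> l * loop_mode r lam k l e x) = 0" for e x
      using single[OF \<open>i \<in> J\<close>] single[OF \<open>j \<in> J\<close>] eq by (simp add: ring_wave_def)
    from unique(3)[OF this \<open>i \<in> J\<close>] have "\<alpha> i = 0" .
    then show False using \<open>i \<noteq> j\<close> unfolding \<alpha>_def by simp
  qed
qed

lemma ring_basis_independent:
  assumes r: "r > 0" and lampos: "\<forall>j<r. lam j > 0" and k: "k > 0"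
    and J: "J \<subseteq> {j. j < r \<and> sin (k * (lam j / 2)) = 0}"
  shows "fun_space.independent ({ring_wave r lam k 1 0, ring_wave r lam k 0 1} \<union> loop_mode r lam k ` J)"
    (is "fun_space.independent (?W \<union> ?G)")
proof (rule fun_space.independent_if_scalars_zero)
  have "finite J" using J finite_subset[of J "{..<r}"] by auto
  then show "finite (?W \<union> ?G)" by simp
  fix f :: "(nat \<Rightarrow> real \<Rightarrow> real) \<Rightarrow> real" and b
  assume sum0: "(\<Sum>v\<in>?W \<union> ?G. (\<lambda>e x. f v * v e x)) = 0" and b: "b \<in> ?W \<union> ?G"
  note distinct = ring_basis_distinct[OF r lampos k J]
  have "ring_wave r lam k (f (ring_wave r lam k 1 0)) (f (ring_wave r lam k 0 1)) e x
        + (\<Sum>j\<in>J. f (loop_mode r lam k j) * loop_mode r lam k j e x) = 0" for e x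
  proof -
    have "0 = (\<Sum>v\<in>?W \<union> ?G. f v * v e x)"
      using fun_cong[OF fun_cong[OF sum0, of e], of x] by (simp add: sum_fun_apply2)
    also have "\<dots> = (\<Sum>v\<in>?W. f v * v e x) + (\<Sum>v\<in>?G. f v * v e x)"
      using distinct(2,3) \<open>finite J\<close> by (intro sum.union_disjoint) auto
    also have "(\<Sum>v\<in>?W. f v * v e x)
        = f (ring_wave r lam k 1 0) * ring_wave r lam k 1 0 e x + f (ring_wave r lam k 0 1) * ring_wave r lam k 0 1 e x"
      using distinct(1) by simp
    also have "\<dots> = ring_wave r lam k (f (ring_wave r lam k 1 0)) (f (ring_wave r lam k 0 1)) e x"
      by (rule ring_wave_linear)
    also have "(\<Sum>v\<in>?G. f v * v e x) = (\<Sum>j\<in>J. f (loop_mode r lam k j) * loop_mode r lam k j e x)"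
      using sum.reindex[OF distinct(4)] by simp
    finally show ?thesis by simp
  qed
  from ring_wave_loop_modes_unique[OF r lampos k J this] show "f b = 0" using b by blast
qed

lemma dim_ring_eigenspace_zero:
  assumes r: "r > 0" and lampos: "\<forall>j<r. lam j > 0"
  shows "fun_space.dim {F. ring_eigenfunction r lam 0 F} = 1"
proof (rule fun_space.dim_unique[of "{ring_wave r lam 0 1 0}"])
  show "{ring_wave r lam 0 1 0} \<subseteq> {F. ring_eigenfunction r lam 0 F}"
    using ring_wave_eigenfunction[OF r lampos, of 0] by simp
  show "{F. ring_eigenfunction r lam 0 F} \<subseteq> fun_space.span {ring_wave r lam 0 1 0}"
  proof
    fix F assume "F \<in> {F. ring_eigenfunction r lam 0 F}"
    then obtain A where "\<And>e x. F e x = ring_wave r lam 0 A 0 e x"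
      using ring_eigenfunction_zero_constant[OF r lampos] by blast
    then have "F = (\<lambda>e x. A * ring_wave r lam 0 1 0 e x)"
      by (simp add: fun_eq_iff ring_wave_def)
    then show "F \<in> fun_space.span {ring_wave r lam 0 1 0}"
      using scale_in_span[of A "ring_wave r lam 0 1 0"] by simp
  qed
  have "lam 0 > 0" using r lampos by simp
  then have "ring_wave r lam 0 1 0 0 0 = 1" using r by (simp add: ring_wave_def)
  then have "ring_wave r lam 0 1 0 \<noteq> 0" by auto
  then show "fun_space.independent {ring_wave r lam 0 1 0}" by simp
qed simp

lemma dim_ring_eigenspace_pos:
  assumes r: "r > 0" and lampos: "\<forall>j<r. lam j > 0" and k: "k > 0"
  shows "fun_space.dim {F. ring_eigenfunction r lam k F}
       = (if cos (k * ring_pos lam r) = 1 then 2 else 0) + card {j. j < r \<and> sin (k * (lam j / 2)) = 0}"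
proof -
  define J where "J = {j. j < r \<and> sin (k * (lam j / 2)) = 0}"
  define W where "W = (if cos (k * ring_pos lam r) = 1
                       then {ring_wave r lam k 1 0, ring_wave r lam k 0 1} else {})"
  have "J \<subseteq> {j. j < r \<and> sin (k * (lam j / 2)) = 0}" "finite J" unfolding J_def by auto
  note distinct = ring_basis_distinct[OF r lampos k this(1)]
  have "finite W" "W \<inter> loop_mode r lam k ` J = {}" using distinct(2,3) unfolding W_def by auto
  then have "card (W \<union> loop_mode r lam k ` J) = card W + card (loop_mode r lam k ` J)"
    using \<open>finite J\<close> by (simp add: card_Un_disjoint)
  also have "card (loop_mode r lam k ` J) = card J" by (rule card_image[OF distinct(4)])
  also have "card W = (if cos (k * ring_pos lam r) = 1 then 2 else 0)"
    using distinct(1) unfolding W_def by simp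
  finally have card: "card (W \<union> loop_mode r lam k ` J) = (if cos (k * ring_pos lam r) = 1 then 2 else 0) + card J" .
  show ?thesis
    unfolding J_def[symmetric]
  proof (rule fun_space.dim_unique[OF _ _ _ card])
    show "W \<union> loop_mode r lam k ` J \<subseteq> {F. ring_eigenfunction r lam k F}"
      using ring_wave_eigenfunction[OF r lampos] loop_mode_eigenfunction[OF r lampos]
      unfolding W_def J_def by auto
    show "fun_space.independent (W \<union> loop_mode r lam k ` J)"
      using ring_basis_independent[OF r lampos k \<open>J \<subseteq> _\<close>]
      by (rule fun_space.independent_mono) (auto simp: W_def)
    show "{F. ring_eigenfunction r lam k F} \<subseteq> fun_space.span (W \<union> loop_mode r lam k ` J)"
    proof
      fix F assume "F \<in> {F. ring_eigenfunction r lam k F}"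
      moreover have "k \<noteq> 0" using k by simp
      ultimately obtain A B \<alpha> where F_eq: "\<And>e x. F e x = ring_wave r lam k A B e x + (\<Sum>j<r. \<alpha> j * loop_mode r lam k j e x)"
        and wave: "A \<noteq> 0 \<or> B \<noteq> 0 \<Longrightarrow> cos (k * ring_pos lam r) = 1"
        and resonant: "\<And>j. j < r \<Longrightarrow> \<alpha> j \<noteq> 0 \<Longrightarrow> sin (k * (lam j / 2)) = 0"
        using ring_eigenfunction_decomposition[OF r lampos] by blast
      have "F = (\<lambda>e x. A * ring_wave r lam k 1 0 e x) + (\<lambda>e x. B * ring_wave r lam k 0 1 e x)
               + (\<Sum>j<r. (\<lambda>e x. \<alpha> j * loop_mode r lam k j e x))"
      proof -
        have "F e x = A * ring_wave r lam k 1 0 e x + B * ring_wave r lam k 0 1 e x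
                      + (\<Sum>j<r. \<alpha> j * loop_mode r lam k j e x)" for e x
          using F_eq[of e x] ring_wave_linear[of A r lam k e x B] by simp
        then show ?thesis by (simp add: fun_eq_iff sum_fun_apply2)
      qed
      moreover have "(\<lambda>e x. A * ring_wave r lam k 1 0 e x) \<in> fun_space.span (W \<union> loop_mode r lam k ` J)"
        using wave by (intro scale_in_span) (simp add: W_def)
      moreover have "(\<lambda>e x. B * ring_wave r lam k 0 1 e x) \<in> fun_space.span (W \<union> loop_mode r lam k ` J)"
        using wave by (intro scale_in_span) (simp add: W_def)
      moreover have "(\<Sum>j<r. (\<lambda>e x. \<alpha> j * loop_mode r lam k j e x)) \<in> fun_space.span (W \<union> loop_mode r lam k ` J)"
        using resonant by (intro fun_space.span_sum scale_in_span) (simp add: J_def)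
      ultimately show "F \<in> fun_space.span (W \<union> loop_mode r lam k ` J)"
        by (simp add: fun_space.span_add)
    qed
  qed
qed

section \<open>Translation into frequencies\<close>

lemma cos_half_eq_1_iff:
  fixes k L :: real
  assumes k: "k > 0" and L: "L > 0"
  shows "cos (k * (L / 2)) = 1 \<longleftrightarrow> (\<exists>N::nat. N > 0 \<and> k = 4 * pi * real N / L)"
proof
  assume "cos (k * (L / 2)) = 1"
  then obtain n :: int where n: "k * (L / 2) = of_int n * 2 * pi" using cos_one_2pi_int by blast
  have "0 < k * (L / 2)" using k L by simp
  then have "0 < of_int n * (2 * pi)" using n by (simp add: mult.assoc)
  then have "n > 0" using pi_gt_zero by (simp add: zero_less_mult_iff)
  moreover have "k = 4 * pi * real (nat n) / L" using n \<open>n > 0\<close> L by (simp add: field_simps)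
  ultimately show "\<exists>N::nat. N > 0 \<and> k = 4 * pi * real N / L" by (intro exI[of _ "nat n"]) simp
next
  assume "\<exists>N::nat. N > 0 \<and> k = 4 * pi * real N / L"
  then obtain N :: nat where N: "k = 4 * pi * real N / L" by blast
  have "k * (L / 2) = of_int (int N) * 2 * pi" unfolding N using L by (simp add: field_simps)
  then show "cos (k * (L / 2)) = 1" using cos_one_2pi_int by blast
qed

lemma sin_half_eq_0_iff:
  fixes k l :: real
  assumes k: "k > 0" and l: "l > 0"
  shows "sin (k * (l / 2)) = 0 \<longleftrightarrow> (\<exists>N::nat. N > 0 \<and> k = 2 * pi * real N / l)"
proof
  assume "sin (k * (l / 2)) = 0"
  then obtain n :: int where n: "k * (l / 2) = of_int n * pi" using sin_zero_iff_int2 by blast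
  have "0 < k * (l / 2)" using k l by simp
  then have "0 < of_int n * pi" using n by (simp add: mult.commute)
  then have "n > 0" using pi_gt_zero by (simp add: zero_less_mult_iff)
  moreover have "k = 2 * pi * real (nat n) / l" using n \<open>n > 0\<close> l by (simp add: field_simps)
  ultimately show "\<exists>N::nat. N > 0 \<and> k = 2 * pi * real N / l" by (intro exI[of _ "nat n"]) simp
next
  assume "\<exists>N::nat. N > 0 \<and> k = 2 * pi * real N / l"
  then obtain N :: nat where N: "k = 2 * pi * real N / l" by blast
  have "k * (l / 2) = of_int (int N) * pi" unfolding N using l by (simp add: field_simps)
  then show "sin (k * (l / 2)) = 0" using sin_zero_iff_int2 by blast
qed

lemma card_filter_eq_sum_fibres:
  fixes f :: "nat \<Rightarrow> 'a"
  assumes "\<And>j. j < r \<Longrightarrow> P j \<longleftrightarrow> Q (f j)"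
  shows "card {j. j < r \<and> P j} = (\<Sum>y\<in>f ` {..<r}. if Q y then card {j. j < r \<and> f j = y} else 0)"
proof -
  define A where "A y = (if Q y then {j. j < r \<and> f j = y} else {})" for y
  have "{j. j < r \<and> P j} = (\<Union>y\<in>f ` {..<r}. A y)"
    unfolding A_def using assms by auto
  also have "card \<dots> = (\<Sum>y\<in>f ` {..<r}. card (A y))"
    by (rule card_UN_disjoint) (auto simp: A_def)
  also have "\<dots> = (\<Sum>y\<in>f ` {..<r}. if Q y then card {j. j < r \<and> f j = y} else 0)"
    by (rule sum.cong) (auto simp: A_def)
  finally show ?thesis .
qed

theorem mainTheorem7:
  fixes r :: nat and lam :: "nat \<Rightarrow> real" and k :: real
  assumes "r \<ge> 2"
    and "\<forall>j<r. lam j > 0"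
    and "k \<ge> 0"
  defines "L \<equiv> (\<Sum>j<r. lam j)"
  shows "multiplicity_std (2 * r) (ring_tl r) (ring_hd r) (ring_len lam) k =
           (if k = 0 then 1 else 0)
         + (if \<exists>N::nat. N > 0 \<and> k = 4 * pi * real N / L then 2 else 0)
         + (\<Sum>Li \<in> lam ` {..<r}.
              if \<exists>N::nat. N > 0 \<and> k = 2 * pi * real N / Li
              then card {j. j < r \<and> lam j = Li} else 0)"
proof -
  have r: "r > 0" and lampos: "\<forall>j<r. lam j > 0" using assms by auto
  have L: "ring_pos lam r = L / 2" unfolding L_def ring_pos_def ..
  then have "L > 0" using ring_pos_pos[OF r lampos] by simp
  have "multiplicity_std (2 * r) (ring_tl r) (ring_hd r) (ring_len lam) k
      = fun_space.dim {F. ring_eigenfunction r lam k F}"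
    unfolding multiplicity_std_def std_eigenspace_def ..
  also have "\<dots> = (if k = 0 then 1 else 0)
         + (if \<exists>N::nat. N > 0 \<and> k = 4 * pi * real N / L then 2 else 0)
         + (\<Sum>Li \<in> lam ` {..<r}.
              if \<exists>N::nat. N > 0 \<and> k = 2 * pi * real N / Li then card {j. j < r \<and> lam j = Li} else 0)"
  proof (cases "k = 0")
    case True
    then show ?thesis
      using dim_ring_eigenspace_zero[OF r lampos] \<open>L > 0\<close> lampos by (auto intro!: sum.neutral)
  next
    case False
    then have "k > 0" using assms(3) by simp
    have "card {j. j < r \<and> sin (k * (lam j / 2)) = 0}
        = (\<Sum>Li \<in> lam ` {..<r}.
              if \<exists>N::nat. N > 0 \<and> k = 2 * pi * real N / Li then card {j. j < r \<and> lam j = Li} else 0)"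
      using sin_half_eq_0_iff[OF \<open>k > 0\<close>] lampos by (intro card_filter_eq_sum_fibres) simp
    then show ?thesis
      using dim_ring_eigenspace_pos[OF r lampos \<open>k > 0\<close>] cos_half_eq_1_iff[OF \<open>k > 0\<close> \<open>L > 0\<close>] L False
      by simp
  qed
  finally show ?thesis .
qed

end
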